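(* A regular Hausdorff space $X$ has a point-regular base if and only if $\mathcal{F}(X)$ has a point-regular base.
   Context: $\mathcal{F}(X)$ is the set of nonempty finite subsets of $X$ with the Vietoris topology (base: $\langle U_1,\dots,U_k\rangle=\{A: A\subset\bigcup_i U_i,\ A\cap U_j\neq\emptyset\ \forall j\}$, $U_i$ open in $X$). A base $\mathcal{B}$ of a space $Y$ is point-regular if for every $x\in Y$ and every neighborhood $U$ of $x$, only finitely many members of $\mathcal{B}$ contain $x$ and meet $Y\setminus U$. *)

theory Defs
  imports "HOL-Analysis.Analysis"
begin

definition is_base :: "'a topology \<Rightarrow> 'a set set \<Rightarrow> bool" where
  "is_base Y \<B> \<longleftrightarrow> (\<forall>B\<in>\<B>. openin Y B) \<and>
     (\<forall>U. openin Y U \<longrightarrow> (\<exists>\<V>. \<V> \<subseteq> \<B> \<and> \<Union>\<V> = U))"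

definition point_regular_base :: "'a topology \<Rightarrow> 'a set set \<Rightarrow> bool" where
  "point_regular_base Y \<B> \<longleftrightarrow> is_base Y \<B> \<and>
     (\<forall>x\<in>topspace Y. \<forall>U. openin Y U \<and> x \<in> U \<longrightarrow>
        finite {B\<in>\<B>. x \<in> B \<and> B \<inter> (topspace Y - U) \<noteq> {}})"

definition has_point_regular_base :: "'a topology \<Rightarrow> bool" where
  "has_point_regular_base Y \<longleftrightarrow> (\<exists>\<B>. point_regular_base Y \<B>)"

definition vietoris_basic :: "'a topology \<Rightarrow> 'a set set \<Rightarrow> 'a set set" where
  "vietoris_basic X \<U> = {A. finite A \<and> A \<noteq> {} \<and> A \<subseteq> topspace X \<and>
      A \<subseteq> \<Union>\<U> \<and> (\<forall>U\<in>\<U>. A \<inter> U \<noteq> {})}"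

text \<open>The hyperspace F(X) of nonempty finite subsets of X with the Vietoris topology,
generated by the sets \<langle>U_1,...,U_k\<rangle>, k \<ge> 1, U_i open in X.\<close>
definition finite_hyperspace :: "'a topology \<Rightarrow> 'a set topology" where
  "finite_hyperspace X = topology_generated_by
     {vietoris_basic X \<U> | \<U>. finite \<U> \<and> \<U> \<noteq> {} \<and> (\<forall>U\<in>\<U>. openin X U)}"

end

theory Submission
  imports Defs
begin

text \<open>
  From \<open>F(X)\<close> to \<open>X\<close>: \<open>x \<mapsto> {x}\<close> embeds \<open>X\<close> into \<open>F(X)\<close>, and the traces \<open>{x. {x} \<in> D}\<close> of the
  members \<open>D\<close> of a point-regular base of \<open>F(X)\<close> form a point-regular base of \<open>X\<close>.

  From \<open>X\<close> to \<open>F(X)\<close>: in a point-regular base \<open>\<B>\<close> every nonempty member has only finitely many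
  strictly larger members; their number is its rank, and a member has level \<open>l\<close> if its rank is at
  least \<open>l\<close> while all strictly larger members have rank below \<open>l\<close>. Through a point there are only
  finitely many members of bounded rank, and in a T1 space a non-isolated point has, inside each of
  its neighbourhoods, members of every sufficiently large level. Hence the Vietoris sets
  \<open>\<langle>B\<^sub>1,\<dots>,B\<^sub>k\<rangle>\<close> whose \<open>B\<^sub>i\<close> are isolated singletons or share one level form a base of \<open>F(X)\<close>.
  It is point-regular at \<open>A \<in> W\<close>: members of large rank through points of \<open>A\<close> lie in a Vietoris
  neighbourhood of \<open>A\<close> inside \<open>W\<close>, so basic sets of large level containing \<open>A\<close> lie in \<open>W\<close>, while
  for the finitely many small levels each \<open>B\<^sub>i\<close> is one of finitely many candidates.
\<close>

subsection \<open>Point-regular bases, ranks and levels\<close>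

lemma is_baseI_nhd:
  assumes "\<forall>B\<in>\<B>. openin X B" "\<And>U x. openin X U \<Longrightarrow> x \<in> U \<Longrightarrow> \<exists>B\<in>\<B>. x \<in> B \<and> B \<subseteq> U"
  shows "is_base X \<B>"
  unfolding is_base_def
proof (intro conjI allI impI)
  fix U assume "openin X U"
  then show "\<exists>\<V>. \<V> \<subseteq> \<B> \<and> \<Union>\<V> = U"
    using assms(2) by (intro exI[of _ "{B\<in>\<B>. B \<subseteq> U}"]) blast
qed (use assms(1) in blast)

lemma point_regular_base_openin:
  "point_regular_base X \<B> \<Longrightarrow> B \<in> \<B> \<Longrightarrow> openin X B"
  by (auto simp: point_regular_base_def is_base_def)

lemma point_regular_base_nhd:
  assumes "point_regular_base X \<B>" "openin X U" "x \<in> U"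
  obtains B where "B \<in> \<B>" "x \<in> B" "B \<subseteq> U"
  using assms unfolding point_regular_base_def is_base_def by blast

lemma point_regular_base_finite_not_subset:
  assumes "point_regular_base X \<B>" "openin X U" "x \<in> U"
  shows "finite {B\<in>\<B>. x \<in> B \<and> \<not> B \<subseteq> U}"
proof -
  have "finite {B\<in>\<B>. x \<in> B \<and> B \<inter> (topspace X - U) \<noteq> {}}"
    using assms openin_subset unfolding point_regular_base_def by blast
  then show ?thesis
    by (rule finite_subset[rotated])
      (use point_regular_base_openin[OF assms(1)] openin_subset in fastforce)
qed

lemma point_regular_baseI:
  assumes "is_base X \<B>" "\<And>x U. openin X U \<Longrightarrow> x \<in> U \<Longrightarrow> finite {B\<in>\<B>. x \<in> B \<and> \<not> B \<subseteq> U}"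
  shows "point_regular_base X \<B>"
  unfolding point_regular_base_def
proof (intro conjI ballI allI impI)
  fix x U assume "x \<in> topspace X" "openin X U \<and> x \<in> U"
  then show "finite {B\<in>\<B>. x \<in> B \<and> B \<inter> (topspace X - U) \<noteq> {}}"
    using assms(2)[of U x] by (rule_tac finite_subset[rotated]) auto
qed (rule assms(1))

lemma singleton_in_point_regular_base:
  assumes "point_regular_base X \<B>" "openin X {x}"
  shows "{x} \<in> \<B>"
proof -
  obtain B where "B \<in> \<B>" "x \<in> B" "B \<subseteq> {x}"
    using point_regular_base_nhd[OF assms] by blast
  then show ?thesis
    by (metis subset_singletonD empty_iff)
qed

text \<open>\<open>card\<close> is \<open>0\<close> on infinite sets, but for nonempty members of a point-regular base the set
  counted here is finite.\<close>

definition base_rank :: "'a set set \<Rightarrow> 'a set \<Rightarrow> nat" where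
  "base_rank \<B> B = card {C\<in>\<B>. B \<subset> C}"

definition base_level :: "'a set set \<Rightarrow> 'a set \<Rightarrow> nat \<Rightarrow> bool" where
  "base_level \<B> B l \<longleftrightarrow> l \<le> base_rank \<B> B \<and> (\<forall>C\<in>\<B>. B \<subset> C \<longrightarrow> base_rank \<B> C < l)"

lemma point_regular_base_finite_strict_supersets:
  assumes "point_regular_base X \<B>" "B \<in> \<B>" "x \<in> B"
  shows "finite {C\<in>\<B>. B \<subset> C}"
  using point_regular_base_finite_not_subset[OF assms(1) point_regular_base_openin[OF assms(1,2)] assms(3)]
  by (rule finite_subset[rotated]) (use assms(3) in auto)

lemma base_rank_strict_superset_less:
  assumes "point_regular_base X \<B>" "B \<in> \<B>" "x \<in> B" "C \<in> \<B>" "B \<subset> C"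
  shows "base_rank \<B> C < base_rank \<B> B"
  unfolding base_rank_def
  by (rule psubset_card_mono[OF point_regular_base_finite_strict_supersets[OF assms(1-3)]])
    (use assms(4,5) in auto)

lemma card_le_base_rank:
  assumes "point_regular_base X \<B>" "B \<in> \<B>" "x \<in> B" "G \<subseteq> \<B>" "\<forall>C\<in>G. B \<subset> C"
  shows "card G \<le> base_rank \<B> B"
  unfolding base_rank_def
  by (rule card_mono[OF point_regular_base_finite_strict_supersets[OF assms(1-3)]]) (use assms(4,5) in blast)

lemma point_regular_base_exists_strict_subset:
  assumes "point_regular_base X \<B>" "infinite F" "F \<subseteq> {B\<in>\<B>. x \<in> B}"
    "finite G" "G \<subseteq> {B\<in>\<B>. x \<in> B}"
  obtains D where "D \<in> F" "\<forall>C\<in>G. D \<subset> C"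
proof -
  let ?E = "G \<union> (\<Union>C\<in>G. {B\<in>\<B>. x \<in> B \<and> \<not> B \<subseteq> C})"
  have "finite ?E"
    using assms(4,5) point_regular_base_finite_not_subset[OF assms(1) point_regular_base_openin[OF assms(1)]]
    by auto
  then have "infinite (F - ?E)"
    using assms(2) by (rule Diff_infinite_finite)
  then have "F - ?E \<noteq> {}"
    by (rule infinite_imp_nonempty)
  then show thesis
    using assms(3) that by blast
qed

lemma finite_base_supersets_rank_less:
  assumes "point_regular_base X \<B>"
  shows "finite {B\<in>\<B>. x \<in> B \<and> (\<forall>C\<in>\<B>. B \<subset> C \<longrightarrow> base_rank \<B> C < n)}" (is "finite ?F")
proof (rule ccontr)
  assume inf: "infinite ?F"
  then obtain G where G: "G \<subseteq> ?F" "finite G" "card G = n"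
    by (meson infinite_arbitrarily_large)
  obtain E where E: "E \<in> ?F" "\<forall>C\<in>G. E \<subset> C"
    by (rule point_regular_base_exists_strict_subset[OF assms inf _ G(2)]) (use G(1) in blast)+
  obtain D where D: "D \<in> ?F" "D \<subset> E"
    by (rule point_regular_base_exists_strict_subset[OF assms inf, where G="{E}"]) (use E(1) in auto)
  have "card G \<le> base_rank \<B> E"
    using E G(1) by (intro card_le_base_rank[OF assms]) auto
  moreover have "base_rank \<B> E < n"
    using D E(1) by blast
  ultimately show False
    using G(3) by simp
qed

lemma finite_base_rank_le:
  assumes pr: "point_regular_base X \<B>"
  shows "finite {B\<in>\<B>. x \<in> B \<and> base_rank \<B> B \<le> n}"
  using finite_base_supersets_rank_less[OF pr, of x "Suc n"]
  by (rule finite_subset[rotated]) (use base_rank_strict_superset_less[OF pr] in fastforce)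

lemma Inter_point_regular_base_at:
  assumes pr: "point_regular_base X \<B>" and "t1_space X" "x \<in> topspace X"
  shows "\<Inter>{B\<in>\<B>. x \<in> B} = {x}"
proof
  show "{x} \<subseteq> \<Inter>{B\<in>\<B>. x \<in> B}"
    by blast
  show "\<Inter>{B\<in>\<B>. x \<in> B} \<subseteq> {x}"
  proof (rule subsetI, rule ccontr)
    fix y assume y: "y \<in> \<Inter>{B\<in>\<B>. x \<in> B}" "y \<notin> {x}"
    have "openin X (topspace X - {y})"
      using assms(2) by (simp add: t1_space_openin_delete_alt)
    moreover have "x \<in> topspace X - {y}"
      using assms(3) y(2) by blast
    ultimately obtain B where "B \<in> \<B>" "x \<in> B" "B \<subseteq> topspace X - {y}"
      by (rule point_regular_base_nhd[OF pr])
    then show False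
      using y(1) by blast
  qed
qed

lemma point_regular_base_infinite_at_nonisolated:
  assumes pr: "point_regular_base X \<B>" and "t1_space X" "x \<in> topspace X" "\<not> openin X {x}"
  shows "infinite {B\<in>\<B>. x \<in> B}"
proof
  assume fin: "finite {B\<in>\<B>. x \<in> B}"
  have "{B\<in>\<B>. x \<in> B} \<noteq> {}"
    using point_regular_base_nhd[OF pr openin_topspace assms(3)] by blast
  then have "openin X (\<Inter>{B\<in>\<B>. x \<in> B})"
    using fin point_regular_base_openin[OF pr] by (intro openin_Inter) auto
  then show False
    using assms(4) Inter_point_regular_base_at[OF assms(1-3)] by simp
qed

lemma point_regular_base_large_rank_subset:
  assumes pr: "point_regular_base X \<B>" and "finite A" "\<forall>a\<in>A. openin X (V a) \<and> a \<in> V a"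
  obtains N where "\<forall>a\<in>A. \<forall>B\<in>\<B>. a \<in> B \<and> N \<le> base_rank \<B> B \<longrightarrow> B \<subseteq> V a"
proof -
  have "finite (\<Union>a\<in>A. {B\<in>\<B>. a \<in> B \<and> \<not> B \<subseteq> V a})"
    using assms point_regular_base_finite_not_subset[OF pr] by auto
  then obtain N where "\<forall>k\<in>base_rank \<B> ` (\<Union>a\<in>A. {B\<in>\<B>. a \<in> B \<and> \<not> B \<subseteq> V a}). k < N"
    using finite_nat_set_iff_bounded by (meson finite_imageI)
  then show thesis
    by (intro that[of N]) force
qed

lemma exists_base_level_superset:
  assumes pr: "point_regular_base X \<B>" and B: "B \<in> \<B>" "x \<in> B" "l \<le> base_rank \<B> B"
  obtains C where "C \<in> \<B>" "B \<subseteq> C" "base_level \<B> C l"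
proof -
  let ?T = "\<lambda>C. C \<in> \<B> \<and> B \<subseteq> C \<and> l \<le> base_rank \<B> C"
  obtain C where C: "?T C" "\<And>D. ?T D \<Longrightarrow> base_rank \<B> C \<le> base_rank \<B> D"
    using ex_has_least_nat[of ?T B "base_rank \<B>"] B by blast
  have "base_rank \<B> D < l" if D: "D \<in> \<B>" "C \<subset> D" for D
  proof (rule ccontr)
    assume "\<not> base_rank \<B> D < l"
    then have "base_rank \<B> C \<le> base_rank \<B> D"
      using C D by auto
    moreover have "base_rank \<B> D < base_rank \<B> C"
      using base_rank_strict_superset_less[OF pr _ _ D] C(1) B(2) by blast
    ultimately show False
      by simp
  qed
  then show thesis
    using C by (intro that) (auto simp: base_level_def)
qed

lemma eventually_base_level_nhd:
  assumes pr: "point_regular_base X \<B>" and "t1_space X"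
    and U: "openin X U" "x \<in> U" and "\<not> openin X {x}"
  shows "\<forall>\<^sub>F l in sequentially. \<exists>B\<in>\<B>. x \<in> B \<and> B \<subseteq> U \<and> base_level \<B> B l"
proof -
  obtain N where N: "\<forall>B\<in>\<B>. x \<in> B \<and> N \<le> base_rank \<B> B \<longrightarrow> B \<subseteq> U"
    using point_regular_base_large_rank_subset[OF pr, of "{x}" "\<lambda>_. U"] U by auto
  have "\<exists>C\<in>\<B>. x \<in> C \<and> C \<subseteq> U \<and> base_level \<B> C l" if "N \<le> l" for l
  proof -
    have "infinite ({B\<in>\<B>. x \<in> B} - {B\<in>\<B>. x \<in> B \<and> base_rank \<B> B \<le> l})"
      using assms openin_subset
      by (intro Diff_infinite_finite finite_base_rank_le point_regular_base_infinite_at_nonisolated) auto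
    then obtain B where "B \<in> {B\<in>\<B>. x \<in> B} - {B\<in>\<B>. x \<in> B \<and> base_rank \<B> B \<le> l}"
      using infinite_imp_nonempty by blast
    then have B: "B \<in> \<B>" "x \<in> B" "l \<le> base_rank \<B> B"
      by auto
    obtain C where C: "C \<in> \<B>" "B \<subseteq> C" "base_level \<B> C l"
      using exists_base_level_superset[OF pr B] .
    then show ?thesis
      using N B(2) \<open>N \<le> l\<close> by (intro bexI[of _ C]) (auto simp: base_level_def)
  qed
  then show ?thesis
    unfolding eventually_sequentially by blast
qed

subsection \<open>The hyperspace of nonempty finite subsets\<close>

lemma topspace_finite_hyperspace:
  "topspace (finite_hyperspace X) = {A. finite A \<and> A \<noteq> {} \<and> A \<subseteq> topspace X}"
proof (intro equalityI subsetI)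
  fix A assume "A \<in> topspace (finite_hyperspace X)"
  then show "A \<in> {A. finite A \<and> A \<noteq> {} \<and> A \<subseteq> topspace X}"
    unfolding finite_hyperspace_def by (auto simp: vietoris_basic_def)
next
  fix A assume "A \<in> {A. finite A \<and> A \<noteq> {} \<and> A \<subseteq> topspace X}"
  then have "A \<in> vietoris_basic X {topspace X}"
    by (auto simp: vietoris_basic_def)
  then show "A \<in> topspace (finite_hyperspace X)"
    unfolding finite_hyperspace_def topology_generated_by_topspace
    by (rule UnionI[rotated]) auto
qed

lemma openin_finite_hyperspace_memberD:
  assumes "openin (finite_hyperspace X) W" "A \<in> W"
  shows "finite A" "A \<noteq> {}" "A \<subseteq> topspace X"
  using openin_subset[OF assms(1)] assms(2) by (auto simp: topspace_finite_hyperspace)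

lemma openin_finite_hyperspace_vietoris_basic:
  assumes "finite \<U>" "\<U> \<noteq> {}" "\<forall>U\<in>\<U>. openin X U"
  shows "openin (finite_hyperspace X) (vietoris_basic X \<U>)"
  unfolding finite_hyperspace_def by (rule topology_generated_by_Basis) (use assms in blast)

lemma vietoris_basic_mono:
  assumes "\<Union>\<U> \<subseteq> \<Union>\<V>" "\<forall>V\<in>\<V>. \<exists>U\<in>\<U>. U \<subseteq> V"
  shows "vietoris_basic X \<U> \<subseteq> vietoris_basic X \<V>"
proof
  fix C assume C: "C \<in> vietoris_basic X \<U>"
  have "C \<inter> V \<noteq> {}" if "V \<in> \<V>" for V
    using assms(2) that C unfolding vietoris_basic_def by fastforce
  moreover have "C \<subseteq> \<Union>\<V>"
    using C assms(1) unfolding vietoris_basic_def by blast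
  ultimately show "C \<in> vietoris_basic X \<V>"
    using C unfolding vietoris_basic_def by blast
qed

lemma vietoris_basic_pointwise_nhd:
  assumes "A \<in> vietoris_basic X \<U>" "finite \<U>" "\<forall>U\<in>\<U>. openin X U"
  obtains V where "\<forall>a\<in>A. openin X (V a) \<and> a \<in> V a" "vietoris_basic X (V ` A) \<subseteq> vietoris_basic X \<U>"
proof -
  have A: "A \<subseteq> topspace X" "A \<subseteq> \<Union>\<U>" "\<forall>U\<in>\<U>. A \<inter> U \<noteq> {}"
    using assms(1) unfolding vietoris_basic_def by auto
  define V where "V a = \<Inter>(insert (topspace X) {U\<in>\<U>. a \<in> U})" for a
  have V_sub: "V a \<subseteq> U" if "U \<in> \<U>" "a \<in> U" for a U
    unfolding V_def using that by blast
  have "openin X (V a)" for a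
    unfolding V_def using assms(2,3) by (intro openin_Inter) auto
  moreover have "a \<in> V a" if "a \<in> A" for a
    unfolding V_def using A(1) that by blast
  moreover have "vietoris_basic X (V ` A) \<subseteq> vietoris_basic X \<U>"
  proof (rule vietoris_basic_mono)
    show "\<Union>(V ` A) \<subseteq> \<Union>\<U>"
      using A(2) V_sub by blast
    show "\<forall>U\<in>\<U>. \<exists>W\<in>V ` A. W \<subseteq> U"
    proof
      fix U assume "U \<in> \<U>"
      then obtain a where "a \<in> A" "a \<in> U"
        using A(3) by blast
      then show "\<exists>W\<in>V ` A. W \<subseteq> U"
        using V_sub[OF \<open>U \<in> \<U>\<close>] by blast
    qed
  qed
  ultimately show thesis
    using that by blast
qed

lemma vietoris_basic_subset_image:
  assumes "A \<in> vietoris_basic X \<U>" and inside: "\<And>B a. B \<in> \<U> \<Longrightarrow> a \<in> A \<Longrightarrow> a \<in> B \<Longrightarrow> B \<subseteq> V a"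
  shows "vietoris_basic X \<U> \<subseteq> vietoris_basic X (V ` A)"
proof (rule vietoris_basic_mono)
  have AU: "A \<subseteq> \<Union>\<U>" "\<forall>B\<in>\<U>. A \<inter> B \<noteq> {}"
    using assms(1) by (auto simp: vietoris_basic_def)
  show "\<Union>\<U> \<subseteq> \<Union>(V ` A)"
  proof
    fix y assume "y \<in> \<Union>\<U>"
    then obtain B where "B \<in> \<U>" "y \<in> B"
      by blast
    moreover obtain a where "a \<in> A" "a \<in> B"
      using AU(2) \<open>B \<in> \<U>\<close> by blast
    ultimately show "y \<in> \<Union>(V ` A)"
      using inside by blast
  qed
  show "\<forall>U\<in>V ` A. \<exists>B\<in>\<U>. B \<subseteq> U"
  proof
    fix U assume "U \<in> V ` A"
    then obtain a where "a \<in> A" "U = V a"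
      by blast
    moreover obtain B where "B \<in> \<U>" "a \<in> B"
      using AU(1) \<open>a \<in> A\<close> by blast
    ultimately show "\<exists>B\<in>\<U>. B \<subseteq> U"
      using inside by blast
  qed
qed

lemma openin_finite_hyperspace_generated:
  "openin (finite_hyperspace X) W \<Longrightarrow>
    generate_topology_on {vietoris_basic X \<U> | \<U>. finite \<U> \<and> \<U> \<noteq> {} \<and> (\<forall>U\<in>\<U>. openin X U)} W"
  unfolding finite_hyperspace_def by (rule openin_topology_generated_by)

lemma finite_hyperspace_vietoris_nhd:
  assumes "openin (finite_hyperspace X) W" "A \<in> W"
  obtains V where "\<forall>a\<in>A. openin X (V a) \<and> a \<in> V a" "vietoris_basic X (V ` A) \<subseteq> W"
proof -
  have "\<forall>A\<in>W. \<exists>V. (\<forall>a\<in>A. openin X (V a) \<and> a \<in> V a) \<and> vietoris_basic X (V ` A) \<subseteq> W"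
    using openin_finite_hyperspace_generated[OF assms(1)]
  proof (induction rule: generate_topology_on.induct)
    case Empty
    then show ?case
      by simp
  next
    case (Int P Q)
    show ?case
    proof
      fix A assume A: "A \<in> P \<inter> Q"
      obtain V1 where V1: "\<forall>a\<in>A. openin X (V1 a) \<and> a \<in> V1 a" "vietoris_basic X (V1 ` A) \<subseteq> P"
        using Int.IH(1) A by blast
      obtain V2 where V2: "\<forall>a\<in>A. openin X (V2 a) \<and> a \<in> V2 a" "vietoris_basic X (V2 ` A) \<subseteq> Q"
        using Int.IH(2) A by blast
      let ?V = "\<lambda>a. V1 a \<inter> V2 a"
      have "vietoris_basic X (?V ` A) \<subseteq> vietoris_basic X (V1 ` A) \<inter> vietoris_basic X (V2 ` A)"
        by (intro Int_greatest vietoris_basic_mono) auto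
      then show "\<exists>V. (\<forall>a\<in>A. openin X (V a) \<and> a \<in> V a) \<and> vietoris_basic X (V ` A) \<subseteq> P \<inter> Q"
        using V1 V2 by (intro exI[of _ ?V]) auto
    qed
  next
    case (UN K)
    show ?case
    proof
      fix A assume "A \<in> \<Union>K"
      then obtain k where k: "k \<in> K" "A \<in> k"
        by blast
      then obtain V where "\<forall>a\<in>A. openin X (V a) \<and> a \<in> V a" "vietoris_basic X (V ` A) \<subseteq> k"
        using UN.IH by blast
      then show "\<exists>V. (\<forall>a\<in>A. openin X (V a) \<and> a \<in> V a) \<and> vietoris_basic X (V ` A) \<subseteq> \<Union>K"
        using k(1) by blast
    qed
  next
    case (Basis s)
    then obtain \<U> where s: "s = vietoris_basic X \<U>" "finite \<U>" "\<forall>U\<in>\<U>. openin X U"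
      by blast
    show ?case
    proof
      fix A assume "A \<in> s"
      then obtain V where "\<forall>a\<in>A. openin X (V a) \<and> a \<in> V a" "vietoris_basic X (V ` A) \<subseteq> s"
        unfolding s(1) using s(2,3) by (rule vietoris_basic_pointwise_nhd)
      then show "\<exists>V. (\<forall>a\<in>A. openin X (V a) \<and> a \<in> V a) \<and> vietoris_basic X (V ` A) \<subseteq> s"
        by blast
    qed
  qed
  then show thesis
    using assms(2) that by blast
qed

subsection \<open>From the hyperspace to the space\<close>

definition singleton_trace :: "'a topology \<Rightarrow> 'a set set \<Rightarrow> 'a set" where
  "singleton_trace X \<W> = {x\<in>topspace X. {x} \<in> \<W>}"

lemma openin_singleton_trace:
  assumes "openin (finite_hyperspace X) W"
  shows "openin X (singleton_trace X W)"
  using openin_finite_hyperspace_generated[OF assms] unfolding singleton_trace_def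
proof (induction rule: generate_topology_on.induct)
  case Empty
  then show ?case
    by simp
next
  case (Int P Q)
  have "{x\<in>topspace X. {x} \<in> P \<inter> Q} = {x\<in>topspace X. {x} \<in> P} \<inter> {x\<in>topspace X. {x} \<in> Q}"
    by auto
  then show ?case
    using Int.IH by (simp add: openin_Int)
next
  case (UN K)
  have "{x\<in>topspace X. {x} \<in> \<Union>K} = (\<Union>k\<in>K. {x\<in>topspace X. {x} \<in> k})"
    by auto
  then show ?case
    using UN.IH by (auto intro: openin_Union)
next
  case (Basis s)
  then obtain \<U> where s: "s = vietoris_basic X \<U>" "finite \<U>" "\<U> \<noteq> {}" "\<forall>U\<in>\<U>. openin X U"
    by blast
  have "{x\<in>topspace X. {x} \<in> s} = \<Inter>(insert (topspace X) \<U>)"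
    using s(1,3) by (auto simp: vietoris_basic_def)
  moreover have "openin X (\<Inter>(insert (topspace X) \<U>))"
    using s(2,4) by (intro openin_Inter) auto
  ultimately show ?case
    by simp
qed

lemma vietoris_basic_singleton_nhd:
  assumes "openin X U" "x \<in> U"
  shows "openin (finite_hyperspace X) (vietoris_basic X {U})" "{x} \<in> vietoris_basic X {U}"
proof -
  show "openin (finite_hyperspace X) (vietoris_basic X {U})"
    using assms(1) by (intro openin_finite_hyperspace_vietoris_basic) auto
  show "{x} \<in> vietoris_basic X {U}"
    using assms openin_subset by (auto simp: vietoris_basic_def)
qed

lemma point_regular_singleton_traces:
  assumes pr: "point_regular_base (finite_hyperspace X) \<D>"
  shows "point_regular_base X (singleton_trace X ` \<D>)"
proof -
  have "is_base X (singleton_trace X ` \<D>)"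
  proof (rule is_baseI_nhd)
    show "\<forall>P\<in>singleton_trace X ` \<D>. openin X P"
      using point_regular_base_openin[OF pr] by (auto intro: openin_singleton_trace)
    fix U x assume U: "openin X U" "x \<in> U"
    obtain D where "D \<in> \<D>" "{x} \<in> D" "D \<subseteq> vietoris_basic X {U}"
      using point_regular_base_nhd[OF pr vietoris_basic_singleton_nhd[OF U]] .
    then show "\<exists>P\<in>singleton_trace X ` \<D>. x \<in> P \<and> P \<subseteq> U"
      using U openin_subset
      by (intro bexI[of _ "singleton_trace X D"]) (auto simp: singleton_trace_def vietoris_basic_def)
  qed
  moreover have "finite {P\<in>singleton_trace X ` \<D>. x \<in> P \<and> \<not> P \<subseteq> U}"
    if U: "openin X U" "x \<in> U" for x U
  proof -
    have "{P\<in>singleton_trace X ` \<D>. x \<in> P \<and> \<not> P \<subseteq> U} \<subseteq>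
        singleton_trace X ` {D\<in>\<D>. {x} \<in> D \<and> \<not> D \<subseteq> vietoris_basic X {U}}"
      by (auto simp: singleton_trace_def vietoris_basic_def)
    moreover have "finite {D\<in>\<D>. {x} \<in> D \<and> \<not> D \<subseteq> vietoris_basic X {U}}"
      using point_regular_base_finite_not_subset[OF pr vietoris_basic_singleton_nhd[OF U]] .
    ultimately show ?thesis
      by (meson finite_imageI finite_subset)
  qed
  ultimately show ?thesis
    by (rule point_regular_baseI)
qed

subsection \<open>From the space to the hyperspace\<close>

text \<open>Only finitely many members contain an isolated point, so large levels need not occur there;
  isolated points are covered by their singletons instead.\<close>

definition level_vietoris_base :: "'a topology \<Rightarrow> 'a set set \<Rightarrow> 'a set set set" where
  "level_vietoris_base X \<B> = {vietoris_basic X \<U> | \<U>. \<U> \<subseteq> \<B> \<and> finite \<U> \<and> \<U> \<noteq> {} \<and>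
     (\<exists>l. \<forall>B\<in>\<U>. is_singleton B \<or> base_level \<B> B l)}"

lemma openin_level_vietoris_base:
  assumes "point_regular_base X \<B>" "D \<in> level_vietoris_base X \<B>"
  shows "openin (finite_hyperspace X) D"
  using assms point_regular_base_openin[OF assms(1)] unfolding level_vietoris_base_def
  by (auto intro!: openin_finite_hyperspace_vietoris_basic)

lemma level_vietoris_base_nhd:
  assumes pr: "point_regular_base X \<B>" and t1: "t1_space X"
    and W: "openin (finite_hyperspace X) W" "A \<in> W"
  shows "\<exists>D\<in>level_vietoris_base X \<B>. A \<in> D \<and> D \<subseteq> W"
proof -
  obtain V where V: "\<forall>a\<in>A. openin X (V a) \<and> a \<in> V a" "vietoris_basic X (V ` A) \<subseteq> W"
    using finite_hyperspace_vietoris_nhd[OF W] .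
  note A = openin_finite_hyperspace_memberD[OF W]
  have "\<forall>\<^sub>F l in sequentially. \<forall>a\<in>A. \<not> openin X {a} \<longrightarrow> (\<exists>B\<in>\<B>. a \<in> B \<and> B \<subseteq> V a \<and> base_level \<B> B l)"
  proof (rule eventually_ball_finite[OF A(1)], rule ballI)
    fix a assume a: "a \<in> A"
    show "\<forall>\<^sub>F l in sequentially. \<not> openin X {a} \<longrightarrow> (\<exists>B\<in>\<B>. a \<in> B \<and> B \<subseteq> V a \<and> base_level \<B> B l)"
    proof (cases "openin X {a}")
      case False
      then show ?thesis
        using eventually_base_level_nhd[OF pr t1, of "V a" a] V(1) a by (simp add: eventually_mono)
    qed simp
  qed
  then obtain l where l: "\<forall>a\<in>A. \<not> openin X {a} \<longrightarrow> (\<exists>B\<in>\<B>. a \<in> B \<and> B \<subseteq> V a \<and> base_level \<B> B l)"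
    unfolding eventually_sequentially by auto
  have "\<forall>a\<in>A. \<exists>B\<in>\<B>. a \<in> B \<and> B \<subseteq> V a \<and> (is_singleton B \<or> base_level \<B> B l)"
  proof
    fix a assume a: "a \<in> A"
    show "\<exists>B\<in>\<B>. a \<in> B \<and> B \<subseteq> V a \<and> (is_singleton B \<or> base_level \<B> B l)"
    proof (cases "openin X {a}")
      case True
      then show ?thesis
        using singleton_in_point_regular_base[OF pr True] V(1) a by (intro bexI[of _ "{a}"]) auto
    next
      case False
      then show ?thesis
        using l a by blast
    qed
  qed
  then obtain B where B: "\<forall>a\<in>A. B a \<in> \<B> \<and> a \<in> B a \<and> B a \<subseteq> V a \<and> (is_singleton (B a) \<or> base_level \<B> (B a) l)"
    by metis
  have "vietoris_basic X (B ` A) \<in> level_vietoris_base X \<B>"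
    unfolding level_vietoris_base_def using A(1,2) B by (intro CollectI exI[of _ "B ` A"]) auto
  moreover have "A \<in> vietoris_basic X (B ` A)"
    using A B by (auto simp: vietoris_basic_def)
  moreover have "vietoris_basic X (B ` A) \<subseteq> vietoris_basic X (V ` A)"
    by (rule vietoris_basic_mono) (use B in blast)+
  ultimately show ?thesis
    using V(2) by blast
qed

lemma vietoris_basic_large_level_subset:
  assumes "A \<in> vietoris_basic X \<U>" "\<U> \<subseteq> \<B>" "\<forall>B\<in>\<U>. is_singleton B \<or> base_level \<B> B l"
    and "\<forall>a\<in>A. \<forall>B\<in>\<B>. a \<in> B \<and> N \<le> base_rank \<B> B \<longrightarrow> B \<subseteq> V a"
    and "\<forall>a\<in>A. a \<in> V a" "N \<le> l"
  shows "vietoris_basic X \<U> \<subseteq> vietoris_basic X (V ` A)"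
proof (rule vietoris_basic_subset_image[OF assms(1)])
  fix B a assume B: "B \<in> \<U>" "a \<in> A" "a \<in> B"
  show "B \<subseteq> V a"
  proof (cases "is_singleton B")
    case True
    then show ?thesis
      using assms(5) B by (auto simp: is_singleton_def)
  next
    case False
    then have "N \<le> base_rank \<B> B"
      using assms(3,6) B(1) by (auto simp: base_level_def)
    then show ?thesis
      using assms(2,4) B by blast
  qed
qed

lemma vietoris_basic_small_level_members:
  assumes "A \<in> vietoris_basic X \<U>" "\<U> \<subseteq> \<B>" "\<forall>B\<in>\<U>. is_singleton B \<or> base_level \<B> B l" "l < N"
  shows "\<U> \<subseteq> (\<Union>a\<in>A. {B\<in>\<B>. a \<in> B \<and> (\<forall>C\<in>\<B>. B \<subset> C \<longrightarrow> base_rank \<B> C < N)}) \<union> (\<lambda>a. {a}) ` A"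
proof
  fix B assume "B \<in> \<U>"
  moreover have "\<forall>B\<in>\<U>. A \<inter> B \<noteq> {}"
    using assms(1) by (simp add: vietoris_basic_def)
  ultimately obtain a where a: "a \<in> A" "a \<in> B"
    by blast
  from assms(3) \<open>B \<in> \<U>\<close> consider "is_singleton B" | "base_level \<B> B l"
    by blast
  then show "B \<in> (\<Union>a\<in>A. {B\<in>\<B>. a \<in> B \<and> (\<forall>C\<in>\<B>. B \<subset> C \<longrightarrow> base_rank \<B> C < N)}) \<union> (\<lambda>a. {a}) ` A"
  proof cases
    case 1
    then have "B = {a}"
      using a(2) by (auto simp: is_singleton_def)
    then show ?thesis
      using a(1) by simp
  next
    case 2
    then have "\<forall>C\<in>\<B>. B \<subset> C \<longrightarrow> base_rank \<B> C < N"
      using assms(4) unfolding base_level_def by auto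
    then show ?thesis
      using a \<open>B \<in> \<U>\<close> assms(2) by blast
  qed
qed

lemma finite_level_vietoris_base_not_subset:
  assumes pr: "point_regular_base X \<B>" and W: "openin (finite_hyperspace X) W" "A \<in> W"
  shows "finite {D\<in>level_vietoris_base X \<B>. A \<in> D \<and> \<not> D \<subseteq> W}"
proof -
  obtain V where V: "\<forall>a\<in>A. openin X (V a) \<and> a \<in> V a" "vietoris_basic X (V ` A) \<subseteq> W"
    using finite_hyperspace_vietoris_nhd[OF W] .
  note A = openin_finite_hyperspace_memberD[OF W]
  obtain N where N: "\<forall>a\<in>A. \<forall>B\<in>\<B>. a \<in> B \<and> N \<le> base_rank \<B> B \<longrightarrow> B \<subseteq> V a"
    using point_regular_base_large_rank_subset[OF pr A(1) V(1)] .
  define M where "M = (\<Union>a\<in>A. {B\<in>\<B>. a \<in> B \<and> (\<forall>C\<in>\<B>. B \<subset> C \<longrightarrow> base_rank \<B> C < N)}) \<union> (\<lambda>a. {a}) ` A"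
  have "finite M"
    unfolding M_def using A(1) finite_base_supersets_rank_less[OF pr] by blast
  have "{D\<in>level_vietoris_base X \<B>. A \<in> D \<and> \<not> D \<subseteq> W} \<subseteq> vietoris_basic X ` Pow M"
  proof (rule subsetI, elim CollectE conjE)
    fix D assume "D \<in> level_vietoris_base X \<B>" "A \<in> D" "\<not> D \<subseteq> W"
    then obtain \<U> l where \<U>: "D = vietoris_basic X \<U>" "\<U> \<subseteq> \<B>"
        "\<forall>B\<in>\<U>. is_singleton B \<or> base_level \<B> B l"
      unfolding level_vietoris_base_def by blast
    have "l < N"
    proof (rule ccontr)
      assume "\<not> l < N"
      then have "D \<subseteq> vietoris_basic X (V ` A)"
        unfolding \<U>(1) using \<open>A \<in> D\<close> \<U> N V(1) by (intro vietoris_basic_large_level_subset) auto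
      then show False
        using V(2) \<open>\<not> D \<subseteq> W\<close> by blast
    qed
    then have "\<U> \<subseteq> M"
      unfolding M_def using \<open>A \<in> D\<close> \<U> by (intro vietoris_basic_small_level_members) auto
    then show "D \<in> vietoris_basic X ` Pow M"
      using \<U>(1) by blast
  qed
  then show ?thesis
    using \<open>finite M\<close> by (meson finite_Pow_iff finite_imageI finite_subset)
qed

lemma point_regular_level_vietoris_base:
  assumes "point_regular_base X \<B>" "t1_space X"
  shows "point_regular_base (finite_hyperspace X) (level_vietoris_base X \<B>)"
proof (rule point_regular_baseI)
  show "is_base (finite_hyperspace X) (level_vietoris_base X \<B>)"
    using openin_level_vietoris_base[OF assms(1)] level_vietoris_base_nhd[OF assms]
    by (intro is_baseI_nhd) auto
qed (rule finite_level_vietoris_base_not_subset[OF assms(1)])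

theorem theorem4p7:
  fixes X :: "'a topology"
  assumes "regular_space X" and "Hausdorff_space X"
  shows "has_point_regular_base X \<longleftrightarrow> has_point_regular_base (finite_hyperspace X)"
  using point_regular_level_vietoris_base[OF _ Hausdorff_imp_t1_space[OF assms(2)]]
    point_regular_singleton_traces
  unfolding has_point_regular_base_def by blast

end
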